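(* For real $x>0$, let $$W_0(x)=\sum_{\substack{n\geqslant 1\\ \lfloor x/n\rfloor=\lfloor x/(n+1)\rfloor}}\bigl\lvert \{x/(n+1)\}-\{x/n\}\bigr\rvert .$$ Then, for $x>0$, $$W_0(x)=\frac 23\sqrt{x}+O(1),$$ with an absolute implied constant.
   Context: For a real number $t$, $\lfloor t\rfloor$ denotes its integer part and $\{t\}=t-\lfloor t\rfloor$ its fractional part. *)

theory Defs
  imports Complex_Main
begin

definition W0_term :: "real \<Rightarrow> nat \<Rightarrow> real" where
  "W0_term x n =
     (if n \<ge> 1 \<and> \<lfloor>x / real n\<rfloor> = \<lfloor>x / real (n + 1)\<rfloor>
      then \<bar>frac (x / real (n + 1)) - frac (x / real n)\<bar> else 0)"

definition W0 :: "real \<Rightarrow> real" where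
  "W0 x = (\<Sum>n. W0_term x n)"

end

theory Submission
  imports Defs "HOL-Real_Asymp.Real_Asymp"
begin

text \<open>Write \<open>a\<^sub>n = x/n - x/(n+1) = x/(n(n+1))\<close>. The terms with \<open>n(n+1) \<le> x\<close> vanish, at most
  one further term is nonzero but \<open>\<le> 1\<close>, and once \<open>a\<^sub>n < 1\<close> the summand equals
  \<open>a\<^sub>n - a\<^sub>n\<^sup>2 + a\<^sub>n ({x/n} - {x/(n+1)})\<close>. Summed over \<open>n \<ge> N = \<lfloor>\<surd>x\<rfloor> + 1\<close>, the first part
  telescopes to \<open>x/N \<approx> \<surd>x\<close>, the second is \<open>x\<^sup>2/(3N\<^sup>3) + O(1) \<approx> \<surd>x/3\<close>
  because \<open>1/(n\<^sup>2(n+1)\<^sup>2)\<close> is squeezed between consecutive differences of \<open>1/(3n\<^sup>3)\<close>, and the third is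
  bounded by \<open>a\<^sub>N < 1\<close> by Abel summation, since \<open>a\<^sub>n\<close> decreases and fractional parts lie in \<open>[0,1)\<close>.\<close>

lemma summable_between_telescoping:
  fixes b g G :: "nat \<Rightarrow> real"
  assumes "G \<longlonglongrightarrow> 0" "g \<longlonglongrightarrow> 0"
    and lower: "\<And>i. G i - G (Suc i) \<le> b i" and upper: "\<And>i. b i \<le> g i - g (Suc i)"
  shows "summable b" "G 0 \<le> suminf b" "suminf b \<le> g 0"
proof -
  have G: "(\<lambda>i. G i - G (Suc i)) sums G 0" and g: "(\<lambda>i. g i - g (Suc i)) sums g 0"
    using telescope_sums'[OF assms(1)] telescope_sums'[OF assms(2)] by simp_all
  have "summable (\<lambda>i. b i - (G i - G (Suc i)))"
    by (rule summable_comparison_test'[OF summable_diff[OF sums_summable[OF g] sums_summable[OF G]]])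
       (use lower upper in \<open>simp add: abs_le_iff\<close>)
  from summable_add[OF this sums_summable[OF G]] show b: "summable b"
    by simp
  show "G 0 \<le> suminf b"
    using suminf_le[OF lower sums_summable[OF G] b] sums_unique[OF G] by simp
  show "suminf b \<le> g 0"
    using suminf_le[OF upper b sums_summable[OF g]] sums_unique[OF g] by simp
qed

lemma abel_summation_decseq_bound:
  fixes a \<theta> :: "nat \<Rightarrow> real"
  assumes dec: "decseq a" and lim: "a \<longlonglongrightarrow> 0" and \<theta>: "\<And>i. 0 \<le> \<theta> i" "\<And>i. \<theta> i \<le> 1"
  shows "summable (\<lambda>i. a i * (\<theta> i - \<theta> (Suc i)))"
    and "\<bar>\<Sum>i. a i * (\<theta> i - \<theta> (Suc i))\<bar> \<le> a 0"
proof -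
  define c where "c i = (a i - a (Suc i)) * \<theta> (Suc i)" for i
  have a_nonneg: "0 \<le> a i" for i
    using decseq_ge[OF dec lim] .
  have a_step: "a (Suc i) \<le> a i" for i
    using dec by (simp add: decseq_Suc_iff)
  have P_bounds: "0 \<le> a i * \<theta> i" "a i * \<theta> i \<le> a i" for i
    using a_nonneg[of i] \<theta>[of i] by (simp_all add: mult_left_le)
  have "(\<lambda>i. a i * \<theta> i) \<longlonglongrightarrow> 0"
    by (rule tendsto_sandwich[OF _ _ tendsto_const lim]) (simp_all add: P_bounds)
  from telescope_sums'[OF this]
  have P: "(\<lambda>i. a i * \<theta> i - a (Suc i) * \<theta> (Suc i)) sums (a 0 * \<theta> 0)"
    by simp
  have "0 \<le> c i" "c i \<le> a i - a (Suc i)" for i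
    using a_step[of i] \<theta>[of "Suc i"] by (simp_all add: c_def mult_left_le)
  then have c: "summable c" "0 \<le> suminf c" "suminf c \<le> a 0"
    using summable_between_telescoping[of "\<lambda>_. 0" a c] lim by simp_all
  have "(\<lambda>i. a i * (\<theta> i - \<theta> (Suc i))) = (\<lambda>i. (a i * \<theta> i - a (Suc i) * \<theta> (Suc i)) - c i)"
    by (simp add: c_def fun_eq_iff algebra_simps)
  then have sums: "(\<lambda>i. a i * (\<theta> i - \<theta> (Suc i))) sums (a 0 * \<theta> 0 - suminf c)"
    using sums_diff[OF P summable_sums[OF c(1)]] by simp
  then show "summable (\<lambda>i. a i * (\<theta> i - \<theta> (Suc i)))"
    by (rule sums_summable)
  show "\<bar>\<Sum>i. a i * (\<theta> i - \<theta> (Suc i))\<bar> \<le> a 0"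
    using sums_unique[OF sums] c P_bounds[of 0] by linarith
qed

lemma inverse_square_consecutive_le:
  fixes r :: real
  assumes "r > 0"
  shows "1 / (r\<^sup>2 * (r + 1)\<^sup>2) \<le> 1 / (3 * r ^ 3) - 1 / (3 * (r + 1) ^ 3)"
proof -
  have "1 / (3 * r ^ 3) - 1 / (3 * (r + 1) ^ 3) = (3 * r\<^sup>2 + 3 * r + 1) / (3 * r ^ 3 * (r + 1) ^ 3)"
    using assms by (simp add: field_simps) algebra
  moreover have "1 / (r\<^sup>2 * (r + 1)\<^sup>2) = (3 * r\<^sup>2 + 3 * r) / (3 * r ^ 3 * (r + 1) ^ 3)"
    using assms by (simp add: field_simps) algebra
  ultimately show ?thesis
    using assms by (auto intro: divide_right_mono)
qed

lemma inverse_square_consecutive_ge: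
  fixes r :: real
  assumes "r > 0"
  shows "1 / (3 * (r + 1) ^ 3) - 1 / (3 * (r + 2) ^ 3) \<le> 1 / (r\<^sup>2 * (r + 1)\<^sup>2)"
proof -
  have "1 / (3 * (r + 1) ^ 3) - 1 / (3 * (r + 2) ^ 3)
      = (3 * (r + 1)\<^sup>2 + 3 * (r + 1) + 1) / (3 * (r + 1) ^ 3 * (r + 2) ^ 3)"
    using assms by (simp add: field_simps) algebra
  also have "\<dots> \<le> 1 / (r\<^sup>2 * (r + 1)\<^sup>2)"
    using assms by (simp add: divide_simps) (simp add: power2_eq_square power3_eq_cube algebra_simps)
  finally show ?thesis .
qed

lemma inverse_square_consecutive_tail_bounds:
  fixes N :: nat
  assumes "N \<ge> 1"
  defines "q \<equiv> \<lambda>i. 1 / (real (i + N) ^ 2 * real (i + N + 1) ^ 2)"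
  shows "summable q" "1 / (3 * (real N + 1) ^ 3) \<le> suminf q" "suminf q \<le> 1 / (3 * real N ^ 3)"
proof -
  have "(\<lambda>i. 1 / (3 * (real (i + N) + 1) ^ 3)) \<longlonglongrightarrow> 0" "(\<lambda>i. 1 / (3 * real (i + N) ^ 3)) \<longlonglongrightarrow> 0"
    by real_asymp+
  moreover have "1 / (3 * (real (i + N) + 1) ^ 3) - 1 / (3 * (real (Suc i + N) + 1) ^ 3) \<le> q i" for i
  proof -
    have "real (Suc i + N) + 1 = real (i + N) + 2" "real (i + N + 1) = real (i + N) + 1"
      by simp_all
    then show ?thesis
      using inverse_square_consecutive_ge[of "real (i + N)"] assms by (simp only: q_def)
  qed
  moreover have "q i \<le> 1 / (3 * real (i + N) ^ 3) - 1 / (3 * real (Suc i + N) ^ 3)" for i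
  proof -
    have "real (Suc i + N) = real (i + N) + 1" "real (i + N + 1) = real (i + N) + 1"
      by simp_all
    then show ?thesis
      using inverse_square_consecutive_le[of "real (i + N)"] assms by (simp only: q_def)
  qed
  ultimately show "summable q" "1 / (3 * (real N + 1) ^ 3) \<le> suminf q" "suminf q \<le> 1 / (3 * real N ^ 3)"
    using summable_between_telescoping[of "\<lambda>i. 1 / (3 * (real (i + N) + 1) ^ 3)" "\<lambda>i. 1 / (3 * real (i + N) ^ 3)" q]
    by simp_all
qed

lemma frac_gap_eq:
  fixes u v :: real
  assumes "0 < u - v" "u - v < 1"
  shows "(if \<lfloor>u\<rfloor> = \<lfloor>v\<rfloor> then \<bar>frac v - frac u\<bar> else 0)
           = (u - v) - (u - v)\<^sup>2 + (u - v) * (frac u - frac v)"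
proof -
  have "\<lfloor>v\<rfloor> \<le> \<lfloor>u\<rfloor>" "\<lfloor>u\<rfloor> \<le> \<lfloor>v + 1\<rfloor>"
    using assms by (intro floor_mono, linarith)+
  then consider "\<lfloor>u\<rfloor> = \<lfloor>v\<rfloor>" | "\<lfloor>u\<rfloor> = \<lfloor>v\<rfloor> + 1"
    by fastforce
  then show ?thesis
  proof cases
    case 1
    then have "frac u - frac v = u - v"
      by (simp add: frac_def)
    moreover from this assms have "\<bar>frac v - frac u\<bar> = u - v"
      by linarith
    ultimately show ?thesis
      using 1 by (simp add: power2_eq_square)
  next
    case 2
    then have "frac u - frac v = u - v - 1"
      by (simp add: frac_def)
    with 2 show ?thesis
      unfolding \<open>frac u - frac v = u - v - 1\<close> by (simp add: power2_eq_square algebra_simps)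
  qed
qed

lemma W0_term_eq:
  fixes x :: real
  assumes "x > 0" "n \<ge> 1" "x < real n * real (n + 1)"
  defines "a \<equiv> x / (real n * real (n + 1))"
  shows "W0_term x n = a - a\<^sup>2 + a * (frac (x / real n) - frac (x / real (n + 1)))"
proof -
  have gap: "x / real n - x / real (n + 1) = a"
    using assms(2) by (simp add: a_def field_simps)
  have "0 < a" "a < 1"
    using assms by (simp_all add: a_def divide_less_eq)
  with frac_gap_eq[of "x / real n" "x / real (n + 1)", unfolded gap]
  show ?thesis
    using assms(2) by (simp add: W0_term_def)
qed

lemma W0_term_eq_0:
  fixes x :: real
  assumes "real n * real (n + 1) \<le> x"
  shows "W0_term x n = 0"
proof (cases "n \<ge> 1")
  case True
  then have "x / real n - x / real (n + 1) = x / (real n * real (n + 1))"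
    by (simp add: field_simps)
  moreover have "1 \<le> x / (real n * real (n + 1))"
    using True assms by (simp add: le_divide_eq)
  ultimately have "\<lfloor>x / real (n + 1) + 1\<rfloor> \<le> \<lfloor>x / real n\<rfloor>"
    by (intro floor_mono) linarith
  then show ?thesis
    by (simp add: W0_term_def)
qed (simp add: W0_term_def)

lemma W0_term_bounds: "0 \<le> W0_term x n" "W0_term x n \<le> 1"
proof -
  have "\<bar>frac (x / real (n + 1)) - frac (x / real n)\<bar> \<le> 1"
    using frac_lt_1[of "x / real (n + 1)"] frac_lt_1[of "x / real n"]
      frac_ge_0[of "x / real (n + 1)"] frac_ge_0[of "x / real n"] by linarith
  then show "0 \<le> W0_term x n" "W0_term x n \<le> 1"
    by (simp_all add: W0_term_def)
qed

lemma W0_tail_sums_bounds: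
  fixes x :: real and N :: nat
  assumes x: "x > 0" and N: "N \<ge> 1" and x_lt: "x < real N * real (N + 1)"
  obtains S where "(\<lambda>i. W0_term x (i + N)) sums S"
    and "x / real N - x\<^sup>2 / (3 * real N ^ 3) - 1 \<le> S"
    and "S \<le> x / real N - x\<^sup>2 / (3 * (real N + 1) ^ 3) + 1"
proof -
  define a where "a i = x / (real (i + N) * real (i + N + 1))" for i
  define q where "q i = 1 / (real (i + N) ^ 2 * real (i + N + 1) ^ 2)" for i
  define \<theta> where "\<theta> i = frac (x / real (i + N))" for i
  have W0_term_tail: "W0_term x (i + N) = a i - x\<^sup>2 * q i + a i * (\<theta> i - \<theta> (Suc i))" for i
  proof -
    have "x < real (i + N) * real (i + N + 1)"
      using x_lt by (rule less_le_trans) (intro mult_mono; simp)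
    from W0_term_eq[OF x _ this] N show ?thesis
      by (simp add: a_def q_def \<theta>_def power_divide power_mult_distrib)
  qed
  have "(\<lambda>i. x / real (i + N)) \<longlonglongrightarrow> 0"
    by real_asymp
  moreover have "a = (\<lambda>i. x / real (i + N) - x / real (Suc i + N))"
    using N by (simp add: a_def fun_eq_iff field_simps)
  ultimately have a_sums: "a sums (x / real N)"
    using telescope_sums' by fastforce
  have "decseq a"
    unfolding decseq_Suc_iff a_def using x N by (auto intro!: divide_left_mono mult_mono)
  moreover have "a \<longlonglongrightarrow> 0"
    unfolding a_def by real_asymp
  moreover have "0 \<le> \<theta> i" "\<theta> i \<le> 1" for i
    by (simp_all add: \<theta>_def less_imp_le[OF frac_lt_1])
  ultimately have abel: "summable (\<lambda>i. a i * (\<theta> i - \<theta> (Suc i)))"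
      "\<bar>\<Sum>i. a i * (\<theta> i - \<theta> (Suc i))\<bar> \<le> a 0"
    using abel_summation_decseq_bound[of a \<theta>] by blast+
  have "a 0 < 1"
    using x_lt N by (simp add: a_def divide_less_eq)
  have q: "summable q" "1 / (3 * (real N + 1) ^ 3) \<le> suminf q" "suminf q \<le> 1 / (3 * real N ^ 3)"
    using inverse_square_consecutive_tail_bounds[OF N] unfolding q_def by simp_all
  have "x\<^sup>2 / (3 * (real N + 1) ^ 3) \<le> x\<^sup>2 * suminf q" "x\<^sup>2 * suminf q \<le> x\<^sup>2 / (3 * real N ^ 3)"
    using mult_left_mono[OF q(2), of "x\<^sup>2"] mult_left_mono[OF q(3), of "x\<^sup>2"] by simp_all
  moreover have tail_sums: "(\<lambda>i. W0_term x (i + N))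
      sums (x / real N - x\<^sup>2 * suminf q + (\<Sum>i. a i * (\<theta> i - \<theta> (Suc i))))"
    unfolding W0_term_tail
    using sums_add[OF sums_diff[OF a_sums sums_mult[OF summable_sums[OF q(1)]]] summable_sums[OF abel(1)]] .
  ultimately show ?thesis
    using abel(2) \<open>a 0 < 1\<close> by (intro that[OF tail_sums]) linarith+
qed

lemma sqrt_floor_succ_estimates:
  fixes s :: real and N :: nat
  assumes s: "0 < s" and N: "s < real N" "real N \<le> s + 1"
  shows "s - 1 \<le> s\<^sup>2 / real N" "s\<^sup>2 / real N \<le> s"
    and "s ^ 4 / (3 * real N ^ 3) \<le> s / 3" "s / 3 - 2 \<le> s ^ 4 / (3 * (real N + 1) ^ 3)"
proof -
  have N0: "real N > 0"
    using s N by linarith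
  have "(s - 1) * real N \<le> s\<^sup>2"
  proof (cases "s < 1")
    case True
    then have "(s - 1) * real N \<le> 0"
      using N0 by (intro mult_nonpos_nonneg) auto
    then show ?thesis
      by (smt (verit) zero_le_power2)
  next
    case False
    then have "(s - 1) * real N \<le> (s - 1) * (s + 1)"
      using N by (intro mult_left_mono) auto
    then show ?thesis
      by (simp add: power2_eq_square algebra_simps)
  qed
  then show "s - 1 \<le> s\<^sup>2 / real N"
    using N0 by (simp add: le_divide_eq)
  show "s\<^sup>2 / real N \<le> s"
    using s N N0 by (simp add: divide_le_eq power2_eq_square)
  have "s ^ 3 \<le> real N ^ 3"
    using s N by (intro power_mono) auto
  then have "s ^ 4 / (3 * real N ^ 3) \<le> s ^ 4 / (3 * s ^ 3)"
    using s by (intro divide_left_mono) auto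
  also have "\<dots> = s / 3"
    using s by (simp add: power_numeral_reduce)
  finally show "s ^ 4 / (3 * real N ^ 3) \<le> s / 3" .
  have "(real N + 1) ^ 3 \<le> (s + 2) ^ 3"
    using N N0 by (intro power_mono) auto
  then have "s ^ 4 / (3 * (s + 2) ^ 3) \<le> s ^ 4 / (3 * (real N + 1) ^ 3)"
    using s N0 by (intro divide_left_mono mult_pos_pos) auto
  moreover have "(s / 3 - 2) * (3 * (s + 2) ^ 3) \<le> s ^ 4"
    by (simp add: power2_eq_square power3_eq_cube power4_eq_xxxx algebra_simps)
       (use s in \<open>smt (verit) mult_pos_pos\<close>)
  then have "s / 3 - 2 \<le> s ^ 4 / (3 * (s + 2) ^ 3)"
    using s by (simp add: le_divide_eq)
  ultimately show "s / 3 - 2 \<le> s ^ 4 / (3 * (real N + 1) ^ 3)"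
    by linarith
qed

lemma W0_term_sums_near_two_thirds_sqrt:
  fixes x :: real
  assumes x: "x > 0"
  obtains S where "W0_term x sums S" "\<bar>S - 2 / 3 * sqrt x\<bar> \<le> 4"
proof -
  define s where "s = sqrt x"
  define m where "m = nat \<lfloor>s\<rfloor>"
  have s: "0 < s" "s\<^sup>2 = x"
    using x by (simp_all add: s_def)
  have m: "real m \<le> s" "s < real (Suc m)" "real (Suc m) \<le> s + 1"
    using s by (simp_all add: m_def) linarith+
  have "s * s < real (Suc m) * real (Suc m + 1)"
    using s(1) m(2) by (intro mult_strict_mono) auto
  then have "x < real (Suc m) * real (Suc m + 1)"
    unfolding s(2)[symmetric] power2_eq_square .
  moreover have "1 \<le> Suc m"
    by simp
  ultimately obtain S where S: "(\<lambda>i. W0_term x (i + Suc m)) sums S"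
      "x / real (Suc m) - x\<^sup>2 / (3 * real (Suc m) ^ 3) - 1 \<le> S"
      "S \<le> x / real (Suc m) - x\<^sup>2 / (3 * (real (Suc m) + 1) ^ 3) + 1"
    using W0_tail_sums_bounds[OF x] by blast
  have "W0_term x i = 0" if "i < m" for i
  proof (rule W0_term_eq_0)
    have "real i * real (i + 1) \<le> real m * real m"
      using that by (intro mult_mono) auto
    also have "\<dots> \<le> s * s"
      using m(1) by (intro mult_mono) auto
    also have "\<dots> = x"
      using s(2) by (simp add: power2_eq_square)
    finally show "real i * real (i + 1) \<le> x" .
  qed
  then have head: "(\<Sum>i<Suc m. W0_term x i) = W0_term x m"
    by simp
  have "W0_term x sums (S + W0_term x m)"
    using S(1)[unfolded sums_iff_shift head] .
  moreover have "x\<^sup>2 = s ^ 4"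
    unfolding s(2)[symmetric] by (simp flip: power_mult)
  ultimately show ?thesis
    using that S(2,3) W0_term_bounds[of x m] sqrt_floor_succ_estimates[OF s(1) m(2,3)]
    unfolding s(2) s_def[symmetric] by force
qed

theorem proposition1:
  shows "\<exists>C. \<forall>x::real. x > 0 \<longrightarrow>
           summable (W0_term x) \<and> \<bar>W0 x - 2 / 3 * sqrt x\<bar> \<le> C"
proof (intro exI allI impI)
  fix x :: real
  assume "x > 0"
  then obtain S where "W0_term x sums S" "\<bar>S - 2 / 3 * sqrt x\<bar> \<le> 4"
    by (rule W0_term_sums_near_two_thirds_sqrt)
  then show "summable (W0_term x) \<and> \<bar>W0 x - 2 / 3 * sqrt x\<bar> \<le> 4"
    by (simp add: W0_def sums_iff)
qed

end
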